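(* There exists $(X_1,\dots,X_5)\in M'_5$, with $X_j=\begin{bmatrix}A_j\\ B_j\end{bmatrix}$ where $A_j,B_j\in\mathbb M^{2\times 2}$, and there exist real constants $c_1,\dots,c_5$ and $d_1,\dots,d_5$ such that \[ c_i-c_j+d_i\det(A_i-A_j)+\langle A_i-A_j,\,B_iJ\rangle<0\qquad\text{for all } i\neq j,\ i,j\in\{1,\dots,5\}. \]
   Context: $\mathbb M^{m\times n}$ is the space of real $m\times n$ matrices; $\langle\cdot,\cdot\rangle$ is the Frobenius inner product on $\mathbb M^{2\times 2}$, and $J=\begin{pmatrix}0&-1\\1&0\end{pmatrix}$. For $N\ge 3$, an $N$-tuple $(X_1,\dots,X_N)$ in $\mathbb M^{4\times 2}$ is a $T_N$-configuration if there exist $P\in\mathbb M^{4\times 2}$, rank-one matrices $C_1,\dots,C_N\in\mathbb M^{4\times 2}$ with $\sum_{j=1}^N C_j=0$, and numbers $\kappa_1,\dots,\kappa_N>1$ such that $X_j=P+C_1+\dots+C_{j-1}+\kappa_jC_j$ for $j=1,\dots,N$. $M'_N$ denotes the set of $T_N$-configurations in $\mathbb M^{4\times 2}$ whose rank-one matrices have the form $C_j=\begin{pmatrix}p_j\\ (\alpha_j\cdot\delta)q_j\end{pmatrix}\otimes\alpha_j$ (here $\begin{pmatrix}p_j\\ (\alpha_j\cdot\delta)q_j\end{pmatrix}\in\mathbb R^4$), where $p_j,q_j,\alpha_j,\delta\in\mathbb R^2$, $\alpha_j\ne 0$, at least three of the $\alpha_j$ are mutually non-collinear, and $\sum_{j=1}^N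 p_j\otimes\alpha_j=0$, $\sum_{j=1}^N q_j\otimes\alpha_j\otimes\alpha_j=0$. For $X\in\mathbb M^{4\times 2}$ we write $X=\begin{bmatrix}A\\ B\end{bmatrix}$ with $A$ the first two rows and $B$ the last two rows. *)

theory Defs
  imports "HOL-Analysis.Analysis"
begin

text \<open>Real m x n matrices are rendered as \<open>real^'n^'m\<close> (m rows, n columns).
  N-tuples are functions on the index set {1..N}.\<close>

definition outer :: "real^'m \<Rightarrow> real^'n \<Rightarrow> real^'n^'m" where
  "outer u v = (\<chi> i k. u $ i * v $ k)"

definition T_config :: "nat \<Rightarrow> (nat \<Rightarrow> real^2^4) \<Rightarrow> bool" where
  "T_config N X \<longleftrightarrow> N \<ge> 3 \<and>
     (\<exists>(P::real^2^4) (C::nat \<Rightarrow> real^2^4) (\<kappa>::nat \<Rightarrow> real).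
        (\<forall>j\<in>{1..N}. rank (C j) = 1 \<and> \<kappa> j > 1) \<and>
        (\<Sum>j=1..N. C j) = 0 \<and>
        (\<forall>j\<in>{1..N}. X j = P + (\<Sum>i=1..<j. C i) + \<kappa> j *\<^sub>R C j))"

definition stack :: "real^2 \<Rightarrow> real^2 \<Rightarrow> real^4" where
  "stack p q = (\<chi> i. if i = 1 then p $ 1 else if i = 2 then p $ 2
                      else if i = 3 then q $ 1 else q $ 2)"

definition collinear_vec :: "real^2 \<Rightarrow> real^2 \<Rightarrow> bool" where
  "collinear_vec a b \<longleftrightarrow> (\<exists>c::real. a = c *\<^sub>R b \<or> b = c *\<^sub>R a)"

definition M'_config :: "nat \<Rightarrow> (nat \<Rightarrow> real^2^4) \<Rightarrow> bool" where
  "M'_config N X \<longleftrightarrow> N \<ge> 3 \<and>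
     (\<exists>(P::real^2^4) (C::nat \<Rightarrow> real^2^4) (\<kappa>::nat \<Rightarrow> real)
        (p::nat \<Rightarrow> real^2) (q::nat \<Rightarrow> real^2) (\<alpha>::nat \<Rightarrow> real^2) (\<delta>::real^2).
        (\<forall>j\<in>{1..N}. rank (C j) = 1 \<and> \<kappa> j > 1) \<and>
        (\<Sum>j=1..N. C j) = 0 \<and>
        (\<forall>j\<in>{1..N}. X j = P + (\<Sum>i=1..<j. C i) + \<kappa> j *\<^sub>R C j) \<and>
        (\<forall>j\<in>{1..N}. C j = outer (stack (p j) ((\<alpha> j \<bullet> \<delta>) *\<^sub>R q j)) (\<alpha> j)) \<and>
        (\<forall>j\<in>{1..N}. \<alpha> j \<noteq> 0) \<and>
        (\<exists>j1\<in>{1..N}. \<exists>j2\<in>{1..N}. \<exists>j3\<in>{1..N}.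
            \<not> collinear_vec (\<alpha> j1) (\<alpha> j2) \<and> \<not> collinear_vec (\<alpha> j1) (\<alpha> j3) \<and>
            \<not> collinear_vec (\<alpha> j2) (\<alpha> j3)) \<and>
        (\<Sum>j=1..N. outer (p j) (\<alpha> j)) = 0 \<and>
        (\<forall>a b c::2. (\<Sum>j=1..N. q j $ a * \<alpha> j $ b * \<alpha> j $ c) = 0))"

definition upper :: "real^2^4 \<Rightarrow> real^2^2" where
  "upper X = (\<chi> i k. X $ (if i = 1 then 1 else 2) $ k)"

definition lower :: "real^2^4 \<Rightarrow> real^2^2" where
  "lower X = (\<chi> i k. X $ (if i = 1 then 3 else 4) $ k)"

definition Jmat :: "real^2^2" where
  "Jmat = (\<chi> i k. if i = 1 \<and> k = 2 then -1 else if i = 2 \<and> k = 1 then 1 else 0)"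

definition frob :: "real^2^2 \<Rightarrow> real^2^2 \<Rightarrow> real" where
  "frob A B = (\<Sum>i\<in>UNIV. \<Sum>k\<in>UNIV. A $ i $ k * B $ i $ k)"

end

theory Submission
  imports Defs
begin

text \<open>Membership in \<open>M'_5\<close> is reduced to
  non-degeneracy of the data and the two moment identities: these force the rank-one matrices
  \<open>C_j\<close> to sum to zero, because the lower block of \<open>\<Sum>_j C_j\<close> is
  \<open>\<Sum>_j (\<alpha>_j\<cdot>\<delta>) q_j \<otimes> \<alpha>_j\<close>, the contraction of the vanishing third moment
  \<open>\<Sum>_j q_j \<otimes> \<alpha>_j \<otimes> \<alpha>_j\<close> with \<open>\<delta>\<close>. The twenty strict inequalities are then a
  finite computation with rational numbers.\<close>

lemma stack_nth:
  "stack p w $ 1 = p $ 1" "stack p w $ 2 = p $ 2" "stack p w $ 3 = w $ 1" "stack p w $ 4 = w $ 2"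
  by (simp_all add: stack_def)

lemma stack_eq_zeroD: "stack p w = 0 \<Longrightarrow> p = 0"
  by (simp add: vec_eq_iff forall_2 forall_4 stack_nth)

lemma upper_outer_stack: "upper (outer (stack p w) a) = outer p a"
  by (simp add: upper_def outer_def vec_eq_iff forall_2 stack_nth)

lemma lower_outer_stack: "lower (outer (stack p w) a) = outer w a"
  by (simp add: lower_def outer_def vec_eq_iff forall_2 stack_nth)

lemma linear_upper: "linear upper"
  by (auto simp: linear_iff upper_def vec_eq_iff)

lemma linear_lower: "linear lower"
  by (auto simp: linear_iff lower_def vec_eq_iff)

lemma rank_outer:
  fixes u :: "real^'m" and v :: "real^'n"
  assumes "u \<noteq> 0" "v \<noteq> 0"
  shows "rank (outer u v) = 1"
proof -
  obtain i k where "u $ i \<noteq> 0" "v $ k \<noteq> 0"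
    using assms by (auto simp: vec_eq_iff)
  then have "outer u v $ i $ k \<noteq> 0"
    by (simp add: outer_def)
  then have "rank (outer u v) \<noteq> 0"
    by (auto simp: rank_eq_0)
  moreover have "outer u v *v x = (v \<bullet> x) *\<^sub>R u" for x
    by (simp add: outer_def vec_eq_iff matrix_vector_mult_def inner_vec_def sum_distrib_left
        mult.commute mult.left_commute)
  then have "range (\<lambda>x. outer u v *v x) \<subseteq> span {u}"
    by (auto simp: span_singleton)
  then have "dim (range (\<lambda>x. outer u v *v x)) \<le> dim (span {u})"
    by (rule dim_subset)
  with \<open>u \<noteq> 0\<close> have "rank (outer u v) \<le> 1"
    by (simp add: rank_dim_range dim_span dim_singleton)
  ultimately show ?thesis
    by linarith
qed

lemma sum_outer_stack_eq_0:
  fixes p q :: "'j \<Rightarrow> real^2" and \<alpha> :: "'j \<Rightarrow> real^'n"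
  assumes p: "(\<Sum>j\<in>S. outer (p j) (\<alpha> j)) = 0"
    and q: "\<forall>a b c. (\<Sum>j\<in>S. q j $ a * \<alpha> j $ b * \<alpha> j $ c) = 0"
  shows "(\<Sum>j\<in>S. outer (stack (p j) ((\<alpha> j \<bullet> \<delta>) *\<^sub>R q j)) (\<alpha> j)) = 0"
proof -
  have upper_entries: "(\<Sum>j\<in>S. p j $ i * \<alpha> j $ k) = 0" for i k
    using p by (simp add: vec_eq_iff outer_def)
  have lower_entries: "(\<Sum>j\<in>S. (\<alpha> j \<bullet> \<delta>) * q j $ a * \<alpha> j $ k) = 0" for a k
  proof -
    have "(\<Sum>j\<in>S. (\<alpha> j \<bullet> \<delta>) * q j $ a * \<alpha> j $ k)
        = (\<Sum>b\<in>UNIV. \<delta> $ b * (\<Sum>j\<in>S. q j $ a * \<alpha> j $ b * \<alpha> j $ k))"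
      by (simp add: inner_vec_def sum_distrib_left sum_distrib_right sum.swap[of _ S] algebra_simps)
    then show ?thesis
      using q by simp
  qed
  have "(\<Sum>j\<in>S. outer (stack (p j) ((\<alpha> j \<bullet> \<delta>) *\<^sub>R q j)) (\<alpha> j)) $ i $ k = 0" for i k
    using exhaust_4[of i] upper_entries lower_entries
    by (auto simp: outer_def stack_nth mult.assoc)
  then show ?thesis
    by (simp add: vec_eq_iff)
qed

lemma M'_configI:
  fixes P :: "real^2^4" and p q \<alpha> :: "nat \<Rightarrow> real^2" and \<delta> :: "real^2" and \<kappa> :: "nat \<Rightarrow> real"
  assumes "N \<ge> 3"
    and C: "\<forall>j\<in>{1..N}. C j = outer (stack (p j) ((\<alpha> j \<bullet> \<delta>) *\<^sub>R q j)) (\<alpha> j)"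
    and X: "\<forall>j\<in>{1..N}. X j = P + (\<Sum>i=1..<j. C i) + \<kappa> j *\<^sub>R C j"
    and nonzero: "\<forall>j\<in>{1..N}. p j \<noteq> 0 \<and> \<alpha> j \<noteq> 0 \<and> \<kappa> j > 1"
    and non_collinear: "\<exists>j1\<in>{1..N}. \<exists>j2\<in>{1..N}. \<exists>j3\<in>{1..N}.
            \<not> collinear_vec (\<alpha> j1) (\<alpha> j2) \<and> \<not> collinear_vec (\<alpha> j1) (\<alpha> j3) \<and>
            \<not> collinear_vec (\<alpha> j2) (\<alpha> j3)"
    and p_moment: "(\<Sum>j=1..N. outer (p j) (\<alpha> j)) = 0"
    and q_moment: "\<forall>a b c. (\<Sum>j=1..N. q j $ a * \<alpha> j $ b * \<alpha> j $ c) = 0"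
  shows "M'_config N X"
proof -
  have "rank (C j) = 1" if "j \<in> {1..N}" for j
    unfolding C[rule_format, OF that]
    using nonzero that by (intro rank_outer) (auto dest: stack_eq_zeroD)
  with nonzero have rank: "\<forall>j\<in>{1..N}. rank (C j) = 1 \<and> \<kappa> j > 1"
    by blast
  have "(\<Sum>j=1..N. C j) = (\<Sum>j=1..N. outer (stack (p j) ((\<alpha> j \<bullet> \<delta>) *\<^sub>R q j)) (\<alpha> j))"
    using C by (intro sum.cong) auto
  also have "\<dots> = 0"
    using p_moment q_moment by (rule sum_outer_stack_eq_0)
  finally have sum: "(\<Sum>j=1..N. C j) = 0" .
  have "\<forall>j\<in>{1..N}. \<alpha> j \<noteq> 0"
    using nonzero by blast
  with \<open>N \<ge> 3\<close> rank sum X C non_collinear p_moment q_moment show ?thesis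
    unfolding M'_config_def by blast
qed

definition ex_alpha :: "nat \<Rightarrow> real^2" where
  "ex_alpha j = [vector [-1, -1], vector [0, 1], vector [7, 4], vector [-1, 5], vector [-2, 1]] ! (j - 1)"

definition ex_p :: "nat \<Rightarrow> real^2" where
  "ex_p j = [vector [73/5, -74/5], vector [57/5, -108/5], vector [7/5, -4/5], vector [0, 6/5],
     vector [-12/5, 4]] ! (j - 1)"

definition ex_q :: "nat \<Rightarrow> real^2" where
  "ex_q j = [vector [199/5, -117/5], vector [-1422/35, 2106/35], vector [-38/35, 18/35],
     vector [3/5, -9/5], vector [16/5, 0]] ! (j - 1)"

definition ex_delta :: "real^2" where
  "ex_delta = vector [0, 1]"

definition ex_kappa :: "nat \<Rightarrow> real" where
  "ex_kappa j = [8/5, 7/5, 16/5, 6/5, 17/5] ! (j - 1)"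

definition ex_C :: "nat \<Rightarrow> real^2^4" where
  "ex_C j = outer (stack (ex_p j) ((ex_alpha j \<bullet> ex_delta) *\<^sub>R ex_q j)) (ex_alpha j)"

definition ex_X :: "nat \<Rightarrow> real^2^4" where
  "ex_X j = (\<Sum>i=1..<j. ex_C i) + ex_kappa j *\<^sub>R ex_C j"

definition ex_c :: "nat \<Rightarrow> real" where
  "ex_c j = [0, 1216, 1577, 321, 158] ! (j - 1)"

definition ex_d :: "nat \<Rightarrow> real" where
  "ex_d j = [8, -10, 9, 6, -3] ! (j - 1)"

lemma atLeastAtMost_1_5: "{1..5::nat} = {1, 2, 3, 4, 5}"
  by auto

lemma M'_config_ex_X: "M'_config 5 ex_X"
proof (rule M'_configI[where P = 0 and \<delta> = ex_delta and C = ex_C])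
  show "\<forall>j\<in>{1..5}. ex_p j \<noteq> 0 \<and> ex_alpha j \<noteq> 0 \<and> ex_kappa j > 1"
    unfolding atLeastAtMost_1_5 by (simp add: ex_p_def ex_alpha_def ex_kappa_def vec_eq_iff forall_2)
  show "\<exists>j1\<in>{1..5}. \<exists>j2\<in>{1..5}. \<exists>j3\<in>{1..5}.
      \<not> collinear_vec (ex_alpha j1) (ex_alpha j2) \<and> \<not> collinear_vec (ex_alpha j1) (ex_alpha j3) \<and>
      \<not> collinear_vec (ex_alpha j2) (ex_alpha j3)"
    by (rule bexI[of _ 1], rule bexI[of _ 2], rule bexI[of _ 3])
      (auto simp: collinear_vec_def ex_alpha_def vec_eq_iff forall_2)
  show "(\<Sum>j=1..5. outer (ex_p j) (ex_alpha j)) = 0"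
    unfolding atLeastAtMost_1_5 by (simp add: ex_p_def ex_alpha_def outer_def vec_eq_iff forall_2)
  show "\<forall>a b c. (\<Sum>j=1..5. ex_q j $ a * ex_alpha j $ b * ex_alpha j $ c) = 0"
    unfolding atLeastAtMost_1_5 by (simp add: ex_q_def ex_alpha_def forall_2)
qed (simp_all add: ex_X_def ex_C_def)

lemma upper_ex_X:
  "upper (ex_X j) = (\<Sum>i=1..<j. outer (ex_p i) (ex_alpha i)) + ex_kappa j *\<^sub>R outer (ex_p j) (ex_alpha j)"
  by (simp add: ex_X_def ex_C_def linear_add[OF linear_upper] linear_scale[OF linear_upper]
      linear_sum[OF linear_upper] upper_outer_stack o_def)

lemma lower_ex_X:
  "lower (ex_X j) = (\<Sum>i=1..<j. outer ((ex_alpha i \<bullet> ex_delta) *\<^sub>R ex_q i) (ex_alpha i))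
     + ex_kappa j *\<^sub>R outer ((ex_alpha j \<bullet> ex_delta) *\<^sub>R ex_q j) (ex_alpha j)"
  by (simp add: ex_X_def ex_C_def linear_add[OF linear_lower] linear_scale[OF linear_lower]
      linear_sum[OF linear_lower] lower_outer_stack o_def)

lemma ex_X_blocks:
  "upper (ex_X 1) = vector [vector [-584/25, -584/25], vector [592/25, 592/25]]"
  "lower (ex_X 1) = vector [vector [1592/25, 1592/25], vector [-936/25, -936/25]]"
  "upper (ex_X 2) = vector [vector [-73/5, 34/25], vector [74/5, -386/25]]"
  "lower (ex_X 2) = vector [vector [199/5, -427/25], vector [-117/5, 1521/25]]"
  "upper (ex_X 3) = vector [vector [419/25, 368/25], vector [-78/25, -426/25]]"
  "lower (ex_X 3) = vector [vector [-1437/25, -9873/175], vector [567/25, 11043/175]]"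
  "upper (ex_X 4) = vector [vector [-24/5, 12/5], vector [194/25, -14/5]]"
  "lower (ex_X 4) = vector [vector [29/5, -1/5], vector [9/5, -9]]"
  "upper (ex_X 5) = vector [vector [288/25, -144/25], vector [-96/5, 48/5]]"
  "lower (ex_X 5) = vector [vector [-384/25, 192/25], vector [0, 0]]"
  by (simp_all add: upper_ex_X lower_ex_X numeral_eq_Suc atLeastLessThanSuc vec_eq_iff forall_2
      outer_def inner_vec_def sum_2 ex_alpha_def ex_p_def ex_q_def ex_kappa_def ex_delta_def)

lemma ex_inequalities:
  "\<forall>i\<in>{1..5}. \<forall>j\<in>{1..5}. i \<noteq> j \<longrightarrow>
     ex_c i - ex_c j + ex_d i * det (upper (ex_X i) - upper (ex_X j))
       + frob (upper (ex_X i) - upper (ex_X j)) (lower (ex_X i) ** Jmat) < 0"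
  unfolding atLeastAtMost_1_5 ball_simps ex_X_blocks
  by (simp add: det_2 frob_def sum_2 matrix_matrix_mult_def Jmat_def ex_c_def ex_d_def)

theorem proposition2p1:
  shows "\<exists>(X::nat \<Rightarrow> real^2^4) (c::nat \<Rightarrow> real) (d::nat \<Rightarrow> real).
     M'_config 5 X \<and>
     (\<forall>i\<in>{1..5}. \<forall>j\<in>{1..5}. i \<noteq> j \<longrightarrow>
        c i - c j + d i * det (upper (X i) - upper (X j))
          + frob (upper (X i) - upper (X j)) (lower (X i) ** Jmat) < 0)"
  using M'_config_ex_X ex_inequalities by blast

end
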